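(* For every instance of 2NC-TAP, every extreme point $x$ of the feasible region of the partition LP $(P)$ satisfies $0\le x_\ell\le 1$ for every link $\ell\in L(G)$; that is, all extreme points of $(P)$ lie in $[0,1]^{L(G)}$.
   Context: An instance of 2NC-TAP consists of a simple undirected graph $G=(V,E)$ with $|V|\ge 3$, a spanning tree $T\subseteq E$ of $G$ (whose edges have cost $0$), and nonnegative costs $\mathrm{cost}(\ell)$ on the links, i.e. the edges of $L(G):=E\setminus T$. Let $N(T)$ denote the set of non-leaf nodes of $T$. For $u\in N(T)$, let $\pi_u$ be the partition of $V\setminus\{u\}$ into the vertex sets of the connected components of $T-u$, and let $\Pi_u$ be the set of all partitions $\mathcal P$ of $V\setminus\{u\}$ such that every set of $\pi_u$ is contained in some set of $\mathcal P$. A link $\ell$ crosses $\mathcal P\in\Pi_u$ if neither end node of $\ell$ is $u$ and the two end nodes of $\ell$ lie in different sets of $\mathcal P$. The partition LP $(P)$ has a variable $x_\ell$ for each link and reads: minimize $\sum_{\ell\in L(G)}\mathrm{cost}(\ell)x_\ell$ subject to $\sum_{\ell \text{ crosses } \mathcal P} x_\ell\ge |\mathcal P|-1$ for all $u\in N(T)$ and all $\mathcal P\in\Pi_u$, and $x_\ell\ge 0$ for all $\ell\in L(G)$. *)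

theory Defs
  imports Complex_Main "HOL-Library.Disjoint_Sets"
begin

definition simple_graph :: "'a set \<Rightarrow> 'a set set \<Rightarrow> bool" where
  "simple_graph V E \<longleftrightarrow> finite V \<and> E \<subseteq> {{a, b} | a b. a \<in> V \<and> b \<in> V \<and> a \<noteq> b}"

definition reach :: "'a set \<Rightarrow> 'a set set \<Rightarrow> ('a \<times> 'a) set" where
  "reach W F = Id_on W \<union> ({(a, b). a \<in> W \<and> b \<in> W \<and> {a, b} \<in> F})\<^sup>+"

definition components :: "'a set \<Rightarrow> 'a set set \<Rightarrow> 'a set set" where
  "components W F = W // reach W F"

definition connected_graph :: "'a set \<Rightarrow> 'a set set \<Rightarrow> bool" where
  "connected_graph W F \<longleftrightarrow> (\<forall>a\<in>W. \<forall>b\<in>W. (a, b) \<in> reach W F)"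

text \<open>Acyclic: no edge lies on a cycle, i.e. the ends of every edge are disconnected
  after deleting that edge.\<close>
definition acyclic_graph :: "'a set \<Rightarrow> 'a set set \<Rightarrow> bool" where
  "acyclic_graph W F \<longleftrightarrow> (\<forall>a b. {a, b} \<in> F \<longrightarrow> (a, b) \<notin> reach W (F - {{a, b}}))"

definition spanning_tree :: "'a set \<Rightarrow> 'a set set \<Rightarrow> 'a set set \<Rightarrow> bool" where
  "spanning_tree V E T \<longleftrightarrow> T \<subseteq> E \<and> connected_graph V T \<and> acyclic_graph V T"

definition degree :: "'a set set \<Rightarrow> 'a \<Rightarrow> nat" where
  "degree F u = card {e \<in> F. u \<in> e}"

definition nonleaf :: "'a set \<Rightarrow> 'a set set \<Rightarrow> 'a set" where
  "nonleaf V T = {u \<in> V. degree T u \<ge> 2}"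

text \<open>pi_u: the partition of V - {u} into vertex sets of components of T - u.\<close>
definition pi_part :: "'a set \<Rightarrow> 'a set set \<Rightarrow> 'a \<Rightarrow> 'a set set" where
  "pi_part V T u = components (V - {u}) T"

definition Pi_parts :: "'a set \<Rightarrow> 'a set set \<Rightarrow> 'a \<Rightarrow> 'a set set set" where
  "Pi_parts V T u = {P. partition_on (V - {u}) P \<and> (\<forall>C\<in>pi_part V T u. \<exists>B\<in>P. C \<subseteq> B)}"

definition links :: "'a set set \<Rightarrow> 'a set set \<Rightarrow> 'a set set" where
  "links E T = E - T"

definition crosses :: "'a \<Rightarrow> 'a set \<Rightarrow> 'a set set \<Rightarrow> bool" where
  "crosses u l P \<longleftrightarrow> u \<notin> l \<and> (\<exists>a b. l = {a, b} \<and> (\<exists>A\<in>P. \<exists>B\<in>P. a \<in> A \<and> b \<in> B \<and> A \<noteq> B))"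

text \<open>Feasible region of the partition LP (P), as vectors in R^{L(G)}; a vector is
  represented by a function on edges that vanishes outside the link set.\<close>
definition partition_LP_region :: "'a set \<Rightarrow> 'a set set \<Rightarrow> 'a set set \<Rightarrow> ('a set \<Rightarrow> real) set" where
  "partition_LP_region V E T = {x.
     (\<forall>e. e \<notin> links E T \<longrightarrow> x e = 0) \<and>
     (\<forall>l\<in>links E T. x l \<ge> 0) \<and>
     (\<forall>u\<in>nonleaf V T. \<forall>P\<in>Pi_parts V T u.
        (\<Sum>l\<in>{l \<in> links E T. crosses u l P}. x l) \<ge> real (card P) - 1)}"

definition extreme_point :: "('b \<Rightarrow> real) \<Rightarrow> ('b \<Rightarrow> real) set \<Rightarrow> bool" where
  "extreme_point x S \<longleftrightarrow> x \<in> S \<and>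
     \<not> (\<exists>y\<in>S. \<exists>z\<in>S. \<exists>t::real. y \<noteq> z \<and> 0 < t \<and> t < 1 \<and> (\<forall>i. x i = t * y i + (1 - t) * z i))"

end

theory Submission
  imports Defs
begin

text \<open>
  If \<open>x\<^sub>l > 1\<close>, lowering \<open>x\<^sub>l\<close> to 1 keeps every constraint: for a partition
  \<open>P \<in> \<Pi>\<^sub>u\<close> crossed by \<open>l\<close>, merging the two blocks containing the ends of \<open>l\<close> gives
  a coarser partition in \<open>\<Pi>\<^sub>u\<close> with one block fewer, all of whose crossing links
  cross \<open>P\<close> and differ from \<open>l\<close>. Raising \<open>x\<^sub>l\<close> trivially keeps feasibility, so
  \<open>x\<close> is the midpoint of two distinct feasible points.
\<close>

lemma partition_on_block_eq:
  assumes "partition_on W P" "X \<in> P" "Y \<in> P" "a \<in> X" "a \<in> Y"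
  shows "X = Y"
  using disjointD[OF partition_onD2[OF assms(1)] assms(2,3)] assms(4,5) by blast

lemma partition_on_merge_blocks:
  assumes P: "partition_on W P" and A: "A \<in> P" and B: "B \<in> P"
  shows "partition_on W (insert (A \<union> B) (P - {A, B}))"
proof (rule partition_onI)
  show "\<Union> (insert (A \<union> B) (P - {A, B})) = W"
    using partition_onD1[OF P] A B by auto
  show "{} \<notin> insert (A \<union> B) (P - {A, B})"
    using partition_onD3[OF P] A by auto
  have disj: "disjnt X Y" if "X \<in> P" "Y \<in> P" "X \<noteq> Y" for X Y
    using partition_onD2[OF P] that by (simp add: pairwise_def)
  fix X Y assume "X \<in> insert (A \<union> B) (P - {A, B})" "Y \<in> insert (A \<union> B) (P - {A, B})" "X \<noteq> Y"
  then consider "X = A \<union> B" "Y \<in> P - {A, B}" | "Y = A \<union> B" "X \<in> P - {A, B}" | "X \<in> P" "Y \<in> P"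
    by blast
  then show "disjnt X Y"
    by cases (use disj A B \<open>X \<noteq> Y\<close> in \<open>auto simp: disjnt_Un1 disjnt_Un2\<close>)
qed

lemma refines_merge_blocks:
  assumes "partition_on W P" "A \<in> P" "B \<in> P"
  shows "refines W P (insert (A \<union> B) (P - {A, B}))"
  unfolding refines_def using assms partition_on_merge_blocks by blast

lemma card_merge_blocks:
  assumes P: "partition_on W P" "finite P" and A: "A \<in> P" and B: "B \<in> P" and "A \<noteq> B"
  shows "card (insert (A \<union> B) (P - {A, B})) = card P - 1"
proof -
  have "A \<union> B \<notin> P"
  proof
    assume "A \<union> B \<in> P"
    obtain a b where "a \<in> A" "b \<in> B"
      using partition_onD3[OF P(1)] A B by (metis all_not_in_conv)
    then have "A \<union> B = A" "A \<union> B = B"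
      using partition_on_block_eq[OF P(1) \<open>A \<union> B \<in> P\<close>] A B by blast+
    then show False using \<open>A \<noteq> B\<close> by simp
  qed
  moreover have "card {A, B} \<le> card P"
    using A B P(2) by (intro card_mono) auto
  ultimately show ?thesis
    using assms by (simp add: card_Diff_subset)
qed

lemma crosses_if_refines:
  assumes "refines W P Q" and "crosses u k Q"
  shows "crosses u k P"
proof -
  have P: "partition_on W P" and Q: "partition_on W Q" and PQ: "\<forall>X\<in>P. \<exists>Y\<in>Q. X \<subseteq> Y"
    using assms(1) unfolding refines_def by auto
  obtain a b C D where k: "k = {a, b}" "u \<notin> k" and CD: "C \<in> Q" "D \<in> Q" "a \<in> C" "b \<in> D" "C \<noteq> D"
    using assms(2) unfolding crosses_def by blast
  obtain A B where AB: "A \<in> P" "B \<in> P" "a \<in> A" "b \<in> B"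
    using CD partition_onD1[OF P] partition_onD1[OF Q] by blast
  have "A \<noteq> B"
  proof
    assume "A = B"
    then obtain Y where "Y \<in> Q" "A \<subseteq> Y" "B \<subseteq> Y" using PQ AB by blast
    then have "C = Y" "D = Y"
      using partition_on_block_eq[OF Q] CD AB by blast+
    then show False using \<open>C \<noteq> D\<close> by simp
  qed
  then show ?thesis unfolding crosses_def using k AB by blast
qed

lemma not_crosses_if_subset_block:
  assumes Q: "partition_on W Q" and "C \<in> Q" "k \<subseteq> C"
  shows "\<not> crosses u k Q"
proof
  assume "crosses u k Q"
  then obtain a b A B where "k = {a, b}" "A \<in> Q" "B \<in> Q" "a \<in> A" "b \<in> B" "A \<noteq> B"
    unfolding crosses_def by blast
  moreover from this have "A = C" "B = C"
    using partition_on_block_eq[OF Q] \<open>C \<in> Q\<close> \<open>k \<subseteq> C\<close> by blast+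
  ultimately show False by simp
qed

lemma Pi_parts_coarsen:
  assumes "P \<in> Pi_parts V T u" "refines (V - {u}) P Q"
  shows "Q \<in> Pi_parts V T u"
proof -
  have "\<exists>Y\<in>Q. C \<subseteq> Y" if C: "C \<in> pi_part V T u" for C
  proof -
    obtain X where "X \<in> P" "C \<subseteq> X" using assms(1) C unfolding Pi_parts_def by auto
    moreover obtain Y where "Y \<in> Q" "X \<subseteq> Y" using assms(2) \<open>X \<in> P\<close> unfolding refines_def by auto
    ultimately show ?thesis by blast
  qed
  moreover have "partition_on (V - {u}) Q" using assms(2) unfolding refines_def by simp
  ultimately show ?thesis unfolding Pi_parts_def by simp
qed

lemma finite_links:
  assumes "simple_graph V E"
  shows "finite (links E T)"
proof -
  have "E \<subseteq> Pow V" "finite V" using assms unfolding simple_graph_def by auto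
  then show ?thesis unfolding links_def by (meson finite_Diff finite_Pow_iff finite_subset)
qed

lemma crossing_sum_without_link:
  assumes G: "simple_graph V E" and x: "x \<in> partition_LP_region V E T"
    and u: "u \<in> nonleaf V T" and P: "P \<in> Pi_parts V T u"
    and l: "l \<in> links E T" "crosses u l P"
  shows "real (card P) - 2 \<le> (\<Sum>k \<in> {k \<in> links E T. crosses u k P} - {l}. x k)"
proof -
  obtain a b A B where ab: "l = {a, b}" and AB: "A \<in> P" "B \<in> P" "a \<in> A" "b \<in> B" "A \<noteq> B"
    using l(2) unfolding crosses_def by blast
  have part: "partition_on (V - {u}) P" using P unfolding Pi_parts_def by simp
  have "finite P" using G part finite_elements unfolding simple_graph_def by blast
  define Q where "Q = insert (A \<union> B) (P - {A, B})"
  have ref: "refines (V - {u}) P Q" unfolding Q_def using refines_merge_blocks[OF part AB(1,2)] .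
  have "card {A, B} \<le> card P" using AB \<open>finite P\<close> by (intro card_mono) auto
  then have card_Q: "real (card Q) = real (card P) - 1"
    unfolding Q_def using card_merge_blocks[OF part \<open>finite P\<close> AB(1,2,5)] AB(5) by simp
  have Q_constraint: "real (card Q) - 1 \<le> (\<Sum>k \<in> {k \<in> links E T. crosses u k Q}. x k)"
    using x u Pi_parts_coarsen[OF P ref] unfolding partition_LP_region_def by blast
  have "\<not> crosses u l Q"
    using not_crosses_if_subset_block[of "V - {u}" Q "A \<union> B" l] ref ab AB
    unfolding Q_def refines_def by auto
  then have "{k \<in> links E T. crosses u k Q} \<subseteq> {k \<in> links E T. crosses u k P} - {l}"
    using crosses_if_refines[OF ref] by blast
  moreover have "\<forall>k \<in> links E T. 0 \<le> x k" using x unfolding partition_LP_region_def by blast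
  ultimately have "(\<Sum>k \<in> {k \<in> links E T. crosses u k Q}. x k)
      \<le> (\<Sum>k \<in> {k \<in> links E T. crosses u k P} - {l}. x k)"
    using finite_links[OF G] by (intro sum_mono2) auto
  with Q_constraint card_Q show ?thesis by linarith
qed

lemma partition_LP_region_upd_increase:
  assumes x: "x \<in> partition_LP_region V E T" and l: "l \<in> links E T" and "x l \<le> c"
  shows "x(l := c) \<in> partition_LP_region V E T"
proof -
  have "(\<Sum>k \<in> K. x k) \<le> (\<Sum>k \<in> K. (x(l := c)) k)" for K
    by (rule sum_mono) (use \<open>x l \<le> c\<close> in simp)
  then have "real (card P) - 1 \<le> (\<Sum>k \<in> {k \<in> links E T. crosses u k P}. (x(l := c)) k)"
    if "u \<in> nonleaf V T" "P \<in> Pi_parts V T u" for u P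
    using x that unfolding partition_LP_region_def by (blast intro: order_trans)
  moreover have "0 \<le> c" using x l \<open>x l \<le> c\<close> unfolding partition_LP_region_def by force
  ultimately show ?thesis using x l unfolding partition_LP_region_def by auto
qed

lemma partition_LP_region_upd_one:
  assumes G: "simple_graph V E" and x: "x \<in> partition_LP_region V E T" and l: "l \<in> links E T"
  shows "x(l := 1) \<in> partition_LP_region V E T"
proof -
  have "real (card P) - 1 \<le> (\<Sum>k \<in> {k \<in> links E T. crosses u k P}. (x(l := 1)) k)"
    if u: "u \<in> nonleaf V T" and P: "P \<in> Pi_parts V T u" for u P
  proof (cases "crosses u l P")
    case True
    let ?S = "{k \<in> links E T. crosses u k P}"
    have "finite ?S" using finite_links[OF G] by simp
    then have "(\<Sum>k \<in> ?S. (x(l := 1)) k) = 1 + (\<Sum>k \<in> ?S - {l}. x k)"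
      using l True by (simp add: sum.remove)
    then show ?thesis using crossing_sum_without_link[OF G x u P l True] by linarith
  next
    case False
    then have "(\<Sum>k \<in> {k \<in> links E T. crosses u k P}. (x(l := 1)) k)
        = (\<Sum>k \<in> {k \<in> links E T. crosses u k P}. x k)"
      by (intro sum.cong) auto
    then show ?thesis using x u P unfolding partition_LP_region_def by simp
  qed
  then show ?thesis using x l unfolding partition_LP_region_def by auto
qed

lemma extreme_point_midpoint_eq:
  assumes "extreme_point x S" "y \<in> S" "z \<in> S" "\<And>i. x i = (y i + z i) / 2"
  shows "y = z"
proof (rule ccontr)
  assume "y \<noteq> z"
  moreover have "\<forall>i. x i = 1/2 * y i + (1 - 1/2) * z i" using assms(4) by (simp add: field_simps)
  ultimately have "\<exists>t::real. y \<noteq> z \<and> 0 < t \<and> t < 1 \<and> (\<forall>i. x i = t * y i + (1 - t) * z i)"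
    by (intro exI[of _ "1/2"]) simp
  then show False using assms(1-3) unfolding extreme_point_def by blast
qed

theorem mainTheorem1:
  fixes V :: "'a set" and E T :: "'a set set" and cost :: "'a set \<Rightarrow> real" and x :: "'a set \<Rightarrow> real"
  assumes "simple_graph V E"
    and "card V \<ge> 3"
    and "spanning_tree V E T"
    and "\<forall>l\<in>links E T. cost l \<ge> 0"
    and "extreme_point x (partition_LP_region V E T)"
  shows "\<forall>l\<in>links E T. 0 \<le> x l \<and> x l \<le> 1"
proof
  fix l assume l: "l \<in> links E T"
  have x: "x \<in> partition_LP_region V E T" using assms(5) unfolding extreme_point_def by simp
  then have "0 \<le> x l" using l unfolding partition_LP_region_def by simp
  moreover have "x l \<le> 1"
  proof (rule ccontr)
    assume "\<not> x l \<le> 1"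
    have "x(l := 1) \<in> partition_LP_region V E T"
      using partition_LP_region_upd_one[OF assms(1) x l] .
    moreover have "x(l := 2 * x l - 1) \<in> partition_LP_region V E T"
      using partition_LP_region_upd_increase[OF x l] \<open>\<not> x l \<le> 1\<close> by simp
    ultimately have "x(l := 1) = x(l := 2 * x l - 1)"
      by (rule extreme_point_midpoint_eq[OF assms(5)]) simp
    then have "(x(l := 1)) l = (x(l := 2 * x l - 1)) l" by (rule arg_cong)
    then show False using \<open>\<not> x l \<le> 1\<close> by simp
  qed
  ultimately show "0 \<le> x l \<and> x l \<le> 1" ..
qed

end
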